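(* Let $0\le \rho<\tfrac12$ and let $P_1\ge P_2$ with $P_1>0$, $P_2\ge 0$, $P_1+P_2=1$. Let $(N^e(t),N^d(t))_{t\ge t_0}$ be a Markov chain on $\mathbb{Z}^2$ with independent steps given by $(N^e,N^d)\to(N^e+1,N^d+1)$ with probability $(1-\rho)P_1$, $(N^e,N^d)\to(N^e+1,N^d-1)$ with probability $\rho P_1$, $(N^e,N^d)\to(N^e-1,N^d-1)$ with probability $(1-\rho)P_2$, and $(N^e,N^d)\to(N^e-1,N^d+1)$ with probability $\rho P_2$. Suppose the pair is stable at time $t_0$, i.e. $N^e(t_0)>0$ and $N^d(t_0)>0$. Let $Q$ be the probability that a recurrence occurs, i.e. that there exists $t>t_0$ with $N^e(t)=0$ or $N^d(t)=0$. Then $$Q\le \left(\frac{P_2}{P_1}\right)^{N^e(t_0)}+\left[\frac{\rho P_1+(1-\rho)P_2}{(1-\rho)P_1+\rho P_2}\right]^{N^d(t_0)}.$$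
   Context: This models error propagation for a rate-1 direct shaping code with parsing length $m=1$ used on SLC flash: i.i.d. input words $\mathbf{w}_1,\mathbf{w}_2$ occur with probabilities $P_1,P_2$; the encoder maps the word with currently larger count to output $1$ and the other to $0$; the output passes through a binary symmetric channel with crossover probability $\rho$; the decoder rebuilds the dictionary from the received bits. $N^e(t)=n_1^e(t)-n_2^e(t)$ is the difference of the counts of $\mathbf{w}_1$ and $\mathbf{w}_2$ among the first $t$ encoder inputs, and $N^d(t)=n_1^d(t)-n_2^d(t)$ the corresponding difference among decoder outputs; their joint evolution is modeled by the random walk in the claim. *)

theory Defs
  imports "HOL-Probability.Probability"
begin

definition walk_pos :: "int \<times> int \<Rightarrow> (int \<times> int) stream \<Rightarrow> nat \<Rightarrow> int \<times> int" where
  "walk_pos s0 \<omega> n = (fst s0 + (\<Sum>i<n. fst (\<omega> !! i)), snd s0 + (\<Sum>i<n. snd (\<omega> !! i)))"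

end

theory Submission
  imports Defs
begin

text \<open>Each coordinate of the chain is on its own a walk with i.i.d. steps \<open>\<plusminus>1\<close>:
  \<open>N\<^sup>e\<close> steps up with probability \<open>P1\<close>, \<open>N\<^sup>d\<close> with probability \<open>p = (1 - \<rho>) P1 + \<rho> P2\<close>.
  A recurrence means that one of the two coordinates hits \<open>0\<close>, so \<open>Q\<close> is at most the sum of
  two ruin probabilities. For a walk stepping up with probability \<open>p\<close> and down with
  probability \<open>q = 1 - p\<close>, the function \<open>x \<mapsto> (q/p)\<^sup>x\<close> is harmonic away from \<open>0\<close>; conditioning
  on the first step and inducting on the horizon \<open>N\<close> shows that the walk started at \<open>x\<close>
  hits \<open>0\<close> within \<open>N\<close> steps with probability at most \<open>(q/p)\<^sup>x\<close>, and \<open>N \<rightarrow> \<infinity>\<close> gives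
  the ruin bound.\<close>

definition hits_zero_within :: "('a \<Rightarrow> int) \<Rightarrow> int \<Rightarrow> nat \<Rightarrow> 'a stream set" where
  "hits_zero_within f x N = {\<omega>. \<exists>n. 0 < n \<and> n \<le> N \<and> x + (\<Sum>i<n. f (\<omega> !! i)) = 0}"

definition hits_zero :: "('a \<Rightarrow> int) \<Rightarrow> int \<Rightarrow> 'a stream set" where
  "hits_zero f x = {\<omega>. \<exists>n>0. x + (\<Sum>i<n. f (\<omega> !! i)) = 0}"

lemma hits_zero_eq_UN_hits_zero_within: "hits_zero f x = (\<Union>N. hits_zero_within f x N)"
  by (auto simp: hits_zero_def hits_zero_within_def)

lemma incseq_hits_zero_within: "incseq (hits_zero_within f x)"
  by (rule incseq_SucI) (auto simp: hits_zero_within_def intro: le_SucI)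

lemma measurable_partial_sum [measurable]:
  "(\<lambda>\<omega>. \<Sum>i<n. f (\<omega> !! i) :: int) \<in> stream_space (measure_pmf D) \<rightarrow>\<^sub>M count_space UNIV"
proof (induction n)
  case (Suc n)
  show ?case
    unfolding sum.lessThan_Suc
    by (rule measurable_compose_countable'[where f="\<lambda>s \<omega>. s + f (\<omega> !! n)", OF _ Suc.IH])
      (auto intro: measurable_compose[OF measurable_snth])
qed simp

lemma sets_hits_zero_within [measurable]:
  "hits_zero_within f x N \<in> sets (stream_space (measure_pmf D))"
proof -
  have "hits_zero_within f x N = (\<Union>n\<in>{0<..N}. {\<omega> \<in> space (stream_space (measure_pmf D)).
          x + (\<Sum>i<n. f (\<omega> !! i)) = 0})"
    by (auto simp: hits_zero_within_def space_stream_space)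
  also have "\<dots> \<in> sets (stream_space (measure_pmf D))"
    by measurable
  finally show ?thesis .
qed

lemma sets_hits_zero [measurable]: "hits_zero f x \<in> sets (stream_space (measure_pmf D))"
  unfolding hits_zero_eq_UN_hits_zero_within by measurable

lemma Stream_in_hits_zero_within_Suc:
  "z ## \<omega> \<in> hits_zero_within f x (Suc N) \<longleftrightarrow> x + f z = 0 \<or> \<omega> \<in> hits_zero_within f (x + f z) N"
proof -
  have split_first: "(\<exists>n>0. n \<le> Suc N \<and> P n) \<longleftrightarrow> P 1 \<or> (\<exists>n>0. n \<le> N \<and> P (Suc n))" for P
    by (metis Suc_le_mono Suc_pred less_Suc_eq_0_disj not_le One_nat_def gr0I le0)
  show ?thesis
    unfolding hits_zero_within_def mem_Collect_eq split_first
    by (simp add: sum.lessThan_Suc_shift add.assoc del: sum.lessThan_Suc)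
qed

lemma emeasure_hits_zero_within_Suc:
  "emeasure (stream_space (measure_pmf D)) (hits_zero_within f x (Suc N)) =
    (\<integral>\<^sup>+z. (if x + f z = 0 then 1
             else emeasure (stream_space (measure_pmf D)) (hits_zero_within f (x + f z) N))
      \<partial>measure_pmf D)" (is "_ = ?rhs")
proof -
  let ?S = "stream_space (measure_pmf D)"
  interpret S: prob_space ?S
    by (rule prob_space.prob_space_stream_space[OF prob_space_measure_pmf])
  have space: "space ?S = UNIV"
    by (simp add: space_stream_space)
  have "emeasure ?S (hits_zero_within f x (Suc N)) =
      (\<integral>\<^sup>+z. emeasure ?S {\<omega> \<in> space ?S. z ## \<omega> \<in> hits_zero_within f x (Suc N)} \<partial>measure_pmf D)"
    by (rule prob_space.emeasure_stream_space[OF prob_space_measure_pmf sets_hits_zero_within])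
  also have "\<dots> = ?rhs"
    by (intro nn_integral_cong)
      (simp add: Stream_in_hits_zero_within_Suc space S.emeasure_space_1[unfolded space])
  finally show ?thesis .
qed

lemma set_pmf_subset_if_sum_pmf_eq_1:
  assumes "finite A" and "sum (pmf D) A = 1"
  shows "set_pmf D \<subseteq> A"
proof -
  have "measure_pmf.prob D A = 1"
    using assms by (simp add: measure_measure_pmf_finite)
  then show ?thesis
    by (subst (asm) measure_pmf.prob_eq_1) (auto simp: AE_measure_pmf_iff)
qed

lemma measure_pmf_eq_sum_pmf_Int:
  assumes "finite A" and "set_pmf D \<subseteq> A"
  shows "measure_pmf.prob D S = sum (pmf D) (S \<inter> A)"
proof -
  have "measure_pmf.prob D S = measure_pmf.prob D (S \<inter> A)"
    using assms(2) by (intro measure_prob_cong_0) (auto simp: set_pmf_eq)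
  then show ?thesis
    using assms(1) by (simp add: measure_measure_pmf_finite)
qed

lemma nn_integral_comp_pm_one:
  fixes g :: "int \<Rightarrow> ennreal"
  assumes "pmf (map_pmf f D) 1 = p" and "pmf (map_pmf f D) (-1) = q" and "p + q = 1"
  shows "(\<integral>\<^sup>+z. g (f z) \<partial>measure_pmf D) = ennreal p * g 1 + ennreal q * g (-1)"
proof -
  have "set_pmf (map_pmf f D) \<subseteq> {1, -1}"
    using assms by (intro set_pmf_subset_if_sum_pmf_eq_1) auto
  then have "(\<integral>\<^sup>+y. g y \<partial>map_pmf f D) = (\<Sum>y\<in>{1, -1}. g y * pmf (map_pmf f D) y)"
    by (intro nn_integral_measure_pmf_support) auto
  then show ?thesis
    using assms by (simp add: mult.commute)
qed

lemma power_ratio_harmonic: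
  fixes p q :: real
  assumes "p \<noteq> 0" and "p + q = 1"
  shows "p * (q / p) ^ Suc (Suc m) + q * (q / p) ^ m = (q / p) ^ Suc m"
proof -
  have "p * (q / p)\<^sup>2 + q = q / p * (q + p)"
    using assms(1) by (simp add: field_simps power2_eq_square)
  then have "p * (q / p)\<^sup>2 + q = q / p"
    using assms(2) by simp
  then show ?thesis
    by (metis distrib_right mult.assoc mult.commute power_Suc power2_eq_square)
qed

lemma emeasure_hits_zero_within_le:
  fixes p q :: real
  assumes step: "pmf (map_pmf f D) 1 = p" "pmf (map_pmf f D) (-1) = q" "p + q = 1"
    and "p > 0"
  shows "emeasure (stream_space (measure_pmf D)) (hits_zero_within f (int x) N) \<le> ennreal ((q / p) ^ x)"
proof (induction N arbitrary: x)
  case 0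
  show ?case
    by (simp add: hits_zero_within_def)
next
  case (Suc N)
  let ?S = "stream_space (measure_pmf D)" and ?r = "q / p"
  interpret S: prob_space ?S
    by (rule prob_space.prob_space_stream_space[OF prob_space_measure_pmf])
  show ?case
  proof (cases x)
    case 0
    then show ?thesis
      using S.emeasure_le_1 by simp
  next
    case (Suc m)
    define G where
      "G d = (if int x + d = 0 then 1 else emeasure ?S (hits_zero_within f (int x + d) N))" for d
    have up: "G 1 \<le> ennreal (?r ^ Suc x)"
      using Suc.IH[of "Suc x"] by (simp add: G_def add.commute)
    have down: "G (-1) \<le> ennreal (?r ^ m)"
      using Suc.IH[of m] \<open>x = Suc m\<close> by (simp add: G_def)
    have "q \<ge> 0"
      using step(2) by auto
    have "emeasure ?S (hits_zero_within f (int x) (Suc N)) = (\<integral>\<^sup>+z. G (f z) \<partial>measure_pmf D)"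
      unfolding emeasure_hits_zero_within_Suc G_def ..
    also have "\<dots> = ennreal p * G 1 + ennreal q * G (-1)"
      using step by (rule nn_integral_comp_pm_one)
    also have "\<dots> \<le> ennreal p * ennreal (?r ^ Suc x) + ennreal q * ennreal (?r ^ m)"
      using up down by (intro add_mono mult_left_mono) auto
    also have "\<dots> = ennreal (p * ?r ^ Suc (Suc m) + q * ?r ^ m)"
      using \<open>p > 0\<close> \<open>q \<ge> 0\<close> \<open>x = Suc m\<close> by (simp add: ennreal_mult ennreal_plus del: power_Suc)
    also have "p * ?r ^ Suc (Suc m) + q * ?r ^ m = ?r ^ x"
      unfolding \<open>x = Suc m\<close> using \<open>p > 0\<close> step(3) by (intro power_ratio_harmonic) auto
    finally show ?thesis .
  qed
qed

lemma measure_hits_zero_le: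
  fixes p q :: real
  assumes "pmf (map_pmf f D) 1 = p" "pmf (map_pmf f D) (-1) = q" "p + q = 1" "p > 0"
  shows "measure (stream_space (measure_pmf D)) (hits_zero f (int x)) \<le> (q / p) ^ x"
proof -
  let ?S = "stream_space (measure_pmf D)"
  interpret S: prob_space ?S
    by (rule prob_space.prob_space_stream_space[OF prob_space_measure_pmf])
  have "q \<ge> 0"
    using assms(2) by auto
  have "emeasure ?S (hits_zero f (int x)) = (SUP N. emeasure ?S (hits_zero_within f (int x) N))"
    unfolding hits_zero_eq_UN_hits_zero_within
    by (rule SUP_emeasure_incseq[symmetric]) (auto intro: incseq_hits_zero_within)
  also have "\<dots> \<le> ennreal ((q / p) ^ x)"
    using emeasure_hits_zero_within_le[OF assms] by (rule SUP_least)
  finally show ?thesis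
    using \<open>q \<ge> 0\<close> \<open>p > 0\<close> by (simp add: S.emeasure_eq_measure)
qed

theorem theorem2:
  fixes \<rho> P1 P2 :: real and D :: "(int \<times> int) pmf" and a b :: nat
  assumes "0 \<le> \<rho>" and "\<rho> < 1/2"
    and "P1 \<ge> P2" and "P1 > 0" and "P2 \<ge> 0" and "P1 + P2 = 1"
    and "pmf D (1, 1) = (1 - \<rho>) * P1"
    and "pmf D (1, -1) = \<rho> * P1"
    and "pmf D (-1, -1) = (1 - \<rho>) * P2"
    and "pmf D (-1, 1) = \<rho> * P2"
    and "a > 0" and "b > 0"
  shows "measure (stream_space (measure_pmf D))
           {\<omega> \<in> space (stream_space (measure_pmf D)).
              \<exists>n>0. fst (walk_pos (int a, int b) \<omega> n) = 0 \<or> snd (walk_pos (int a, int b) \<omega> n) = 0}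
         \<le> (P2 / P1) ^ a + ((\<rho> * P1 + (1 - \<rho>) * P2) / ((1 - \<rho>) * P1 + \<rho> * P2)) ^ b"
proof -
  let ?S = "stream_space (measure_pmf D)"
  let ?A = "{(1, 1), (1, -1), (-1, -1), (-1, 1)} :: (int \<times> int) set"
  have "set_pmf D \<subseteq> ?A"
    using assms(6-10) by (intro set_pmf_subset_if_sum_pmf_eq_1) (auto simp: algebra_simps)
  then have pmf_map_eq_sum: "pmf (map_pmf g D) y = sum (pmf D) (g -` {y} \<inter> ?A)" for g y
    by (simp add: pmf_map measure_pmf_eq_sum_pmf_Int)
  have p_pos: "(1 - \<rho>) * P1 + \<rho> * P2 > 0"
    using assms(1,2,4,5) by (intro add_pos_nonneg mult_pos_pos) auto
  have "{\<omega> \<in> space ?S. \<exists>n>0. fst (walk_pos (int a, int b) \<omega> n) = 0 \<or> snd (walk_pos (int a, int b) \<omega> n) = 0}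
      = hits_zero fst (int a) \<union> hits_zero snd (int b)"
    by (auto simp: walk_pos_def hits_zero_def space_stream_space)
  also have "measure ?S \<dots> \<le> measure ?S (hits_zero fst (int a)) + measure ?S (hits_zero snd (int b))"
    by (rule measure_Un_le) measurable
  also have "\<dots> \<le> (P2 / P1) ^ a + ((\<rho> * P1 + (1 - \<rho>) * P2) / ((1 - \<rho>) * P1 + \<rho> * P2)) ^ b"
  proof (intro add_mono measure_hits_zero_le)
    show "pmf (map_pmf fst D) 1 = P1" "pmf (map_pmf fst D) (-1) = P2"
      using assms(7-10) by (simp_all add: pmf_map_eq_sum vimage_def Int_insert_right algebra_simps)
    show "pmf (map_pmf snd D) 1 = (1 - \<rho>) * P1 + \<rho> * P2"
      "pmf (map_pmf snd D) (-1) = \<rho> * P1 + (1 - \<rho>) * P2"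
      using assms(7-10) by (simp_all add: pmf_map_eq_sum vimage_def Int_insert_right algebra_simps)
  qed (use assms(4,6) p_pos in \<open>auto simp: algebra_simps\<close>)
  finally show ?thesis .
qed

end
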